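(* Let $X$ be a set, $\mathcal{F}\subseteq\mathcal{P}(X)$ a field, $\mathcal{E}\subseteq\mathcal{F}$ an arbitrary subset, and $(\mu^+,\mu^-)$ a conjugate pair of set functions on $\mathcal{F}$ such that $\mu^+(A)=\mu^-(A)$ for all $A\in\mathcal{E}$. Then $(\mathcal{E}, d_{\mu^+})$ is complete if and only if: for every sequence $(A_i)_{i\in\mathbb{N}}$ in $\mathcal{E}$ such that the nets $\{\mu^+(\bigcap_{k=i}^j A_k): i\le j\}$ and $\{\mu^-(\bigcap_{k=i}^j A_k): i\le j\}$ converge to a common limit $L$, the net $\{\bigcap_{k=i}^j A_k: i\le j\}$ converges in $d_{\mu^+}$ to some $A\in\mathcal{E}$ with $\mu^+(A)=L$.
   Context: A field is a family of subsets of $X$ containing $\emptyset$ and closed under complements and finite unions. $I_A$ denotes the indicator function of $A$. Consider $\mu^+,\mu^-:\mathcal{F}\to[0,1]$ with $\mu^\pm(\emptyset)=0$ and $\mu^\pm(X)=1$. $\mu^+$ is subadditive if $I_A\le I_B+I_C\implies \mu^+(A)\le\mu^+(B)+\mu^+(C)$; $\mu^-$ is superadditive if $I_A\ge I_B+I_C\implies\mu^-(A)\ge\mu^-(B)+\mu^-(C)$; $\mu^-$ is co-subadditive with respect to $\mu^+$ if $I_A\le I_B+I_C\implies\mu^-(A)\le\mu^-(B)+\mu^+(C)$; $\mu^+$ is co-superadditive with respect to $\mu^-$ if $I_A\ge I_B+I_C\implies\mu^+(A)\ge\mu^+(B)+\mu^-(C)$ (all for $A,B,C\in\mathcal{F}$).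 The pair $(\mu^+,\mu^-)$ is conjugate if all four properties hold. $d_{\mu^+}(A,B):=\mu^+(A\triangle B)$. Indices range over $i,j\in\mathbb{N}$ with $i\le j$, directed by the product order $(i,j)\le(k,l)\iff i\le k$ and $j\le l$. *)

theory Defs
  imports "HOL-Analysis.Analysis"
begin

text \<open>Fields of subsets of X are the library's algebra X F
  (F \<subseteq> Pow X, {} in F, closed under finite unions and complements).\<close>

definition subadditive :: "'a set \<Rightarrow> 'a set set \<Rightarrow> ('a set \<Rightarrow> real) \<Rightarrow> bool" where
  "subadditive X F mu \<longleftrightarrow> (\<forall>A\<in>F. \<forall>B\<in>F. \<forall>C\<in>F.
     (\<forall>x\<in>X. (indicator A x :: real) \<le> indicator B x + indicator C x) \<longrightarrow> mu A \<le> mu B + mu C)"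

definition superadditive :: "'a set \<Rightarrow> 'a set set \<Rightarrow> ('a set \<Rightarrow> real) \<Rightarrow> bool" where
  "superadditive X F mu \<longleftrightarrow> (\<forall>A\<in>F. \<forall>B\<in>F. \<forall>C\<in>F.
     (\<forall>x\<in>X. (indicator A x :: real) \<ge> indicator B x + indicator C x) \<longrightarrow> mu A \<ge> mu B + mu C)"

definition co_subadditive :: "'a set \<Rightarrow> 'a set set \<Rightarrow> ('a set \<Rightarrow> real) \<Rightarrow> ('a set \<Rightarrow> real) \<Rightarrow> bool" where
  "co_subadditive X F mum mup \<longleftrightarrow> (\<forall>A\<in>F. \<forall>B\<in>F. \<forall>C\<in>F.
     (\<forall>x\<in>X. (indicator A x :: real) \<le> indicator B x + indicator C x) \<longrightarrow> mum A \<le> mum B + mup C)"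

definition co_superadditive :: "'a set \<Rightarrow> 'a set set \<Rightarrow> ('a set \<Rightarrow> real) \<Rightarrow> ('a set \<Rightarrow> real) \<Rightarrow> bool" where
  "co_superadditive X F mup mum \<longleftrightarrow> (\<forall>A\<in>F. \<forall>B\<in>F. \<forall>C\<in>F.
     (\<forall>x\<in>X. (indicator A x :: real) \<ge> indicator B x + indicator C x) \<longrightarrow> mup A \<ge> mup B + mum C)"

definition normalized_set_fun :: "'a set \<Rightarrow> 'a set set \<Rightarrow> ('a set \<Rightarrow> real) \<Rightarrow> bool" where
  "normalized_set_fun X F mu \<longleftrightarrow> (\<forall>A\<in>F. 0 \<le> mu A \<and> mu A \<le> 1) \<and> mu {} = 0 \<and> mu X = 1"

definition conjugate_pair :: "'a set \<Rightarrow> 'a set set \<Rightarrow> ('a set \<Rightarrow> real) \<Rightarrow> ('a set \<Rightarrow> real) \<Rightarrow> bool" where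
  "conjugate_pair X F mup mum \<longleftrightarrow>
     normalized_set_fun X F mup \<and> normalized_set_fun X F mum \<and>
     subadditive X F mup \<and> superadditive X F mum \<and>
     co_subadditive X F mum mup \<and> co_superadditive X F mup mum"

definition d_mu :: "('a set \<Rightarrow> real) \<Rightarrow> 'a set \<Rightarrow> 'a set \<Rightarrow> real" where
  "d_mu mu A B = mu ((A - B) \<union> (B - A))"

definition complete_wrt :: "'b set \<Rightarrow> ('b \<Rightarrow> 'b \<Rightarrow> real) \<Rightarrow> bool" where
  "complete_wrt E d \<longleftrightarrow> (\<forall>s. (\<forall>n. s n \<in> E) \<and>
      (\<forall>e>0. \<exists>N. \<forall>m\<ge>N. \<forall>n\<ge>N. d (s m) (s n) < e)
      \<longrightarrow> (\<exists>A\<in>E. (\<lambda>n. d (s n) A) \<longlonglongrightarrow> 0))"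

definition net_converges :: "('b \<Rightarrow> 'b \<Rightarrow> real) \<Rightarrow> (nat \<Rightarrow> nat \<Rightarrow> 'b) \<Rightarrow> 'b \<Rightarrow> bool" where
  "net_converges dist_fn f L \<longleftrightarrow> (\<forall>e>0. \<exists>i0 j0. i0 \<le> j0 \<and>
      (\<forall>i j. i \<le> j \<and> i0 \<le> i \<and> j0 \<le> j \<longrightarrow> dist_fn (f i j) L < e))"

definition real_net_converges :: "(nat \<Rightarrow> nat \<Rightarrow> real) \<Rightarrow> real \<Rightarrow> bool" where
  "real_net_converges f L \<longleftrightarrow> net_converges (\<lambda>x y. \<bar>x - y\<bar>) f L"

end

theory Submission
  imports Defs
begin

text \<open>Both directions rest on one inequality: for \<open>A \<subseteq> B\<close>, co-superadditivity gives
  \<open>d\<^sub>\<mu>\<^sub>+(A, B) = \<mu>\<^sup>+(B - A) \<le> \<mu>\<^sup>+(B) - \<mu>\<^sup>-(A)\<close>. The windows \<open>C i j = \<Inter>k\<in>{i..j}. A\<^sub>k\<close> shrink as the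
  window grows, so if \<open>\<mu>\<^sup>+(C i j)\<close> and \<open>\<mu>\<^sup>-(C i j)\<close> approach a common limit, the net of windows is
  \<open>d\<^sub>\<mu>\<^sub>+\<close>-Cauchy; its diagonal \<open>C n n = A\<^sub>n\<close> is then a Cauchy sequence in \<open>\<E>\<close>, and completeness yields
  the limit. Conversely, a Cauchy sequence in \<open>\<E>\<close> has a subsequence with \<open>d(A\<^sub>k, A\<^sub>k\<^sub>+\<^sub>1) < 2\<^sup>-\<^sup>k\<close>; for it
  every window \<open>C i j\<close> lies within \<open>2\<^sup>1\<^sup>-\<^sup>i\<close> of \<open>A\<^sub>i\<close>, and since \<open>\<mu>\<^sup>+ = \<mu>\<^sup>-\<close> on \<open>\<E>\<close> both measures of the
  windows converge to \<open>lim \<mu>\<^sup>+(A\<^sub>k)\<close>. The window limit supplied by the hypothesis is then a limit of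
  the subsequence, hence of the Cauchy sequence.\<close>

lemma net_converges_iff_tail:
  "net_converges dist_fn f L \<longleftrightarrow> (\<forall>e>0. \<exists>N. \<forall>i j. N \<le> i \<longrightarrow> i \<le> j \<longrightarrow> dist_fn (f i j) L < e)"
  unfolding net_converges_def
proof (intro iffI allI impI)
  fix e :: real assume "e > 0" "\<forall>e>0. \<exists>i0 j0. i0 \<le> j0 \<and>
    (\<forall>i j. i \<le> j \<and> i0 \<le> i \<and> j0 \<le> j \<longrightarrow> dist_fn (f i j) L < e)"
  then obtain i0 j0 where "i0 \<le> j0" "\<forall>i j. i \<le> j \<and> i0 \<le> i \<and> j0 \<le> j \<longrightarrow> dist_fn (f i j) L < e"
    by blast
  then show "\<exists>N. \<forall>i j. N \<le> i \<longrightarrow> i \<le> j \<longrightarrow> dist_fn (f i j) L < e"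
    by (intro exI[of _ j0]) auto
qed (meson order.trans order_refl)

lemma real_net_converges_unique:
  assumes "real_net_converges f L" "real_net_converges f L'"
  shows "L = L'"
proof (rule ccontr)
  assume "L \<noteq> L'"
  then have "\<bar>L - L'\<bar> / 2 > 0" by simp
  then obtain N N' where
    N: "\<forall>i j. N \<le> i \<longrightarrow> i \<le> j \<longrightarrow> \<bar>f i j - L\<bar> < \<bar>L - L'\<bar> / 2" and
    N': "\<forall>i j. N' \<le> i \<longrightarrow> i \<le> j \<longrightarrow> \<bar>f i j - L'\<bar> < \<bar>L - L'\<bar> / 2"
    using assms unfolding real_net_converges_def net_converges_iff_tail by meson
  define M where "M = max N N'"
  have "\<bar>f M M - L\<bar> < \<bar>L - L'\<bar> / 2" "\<bar>f M M - L'\<bar> < \<bar>L - L'\<bar> / 2"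
    using N[rule_format, of M M] N'[rule_format, of M M] by (simp_all add: M_def)
  then show False by (simp add: abs_if split: if_split_asm)
qed

lemma real_net_converges_if_close_to_seq:
  fixes f :: "nat \<Rightarrow> nat \<Rightarrow> real"
  assumes close: "\<And>i j. i \<le> j \<Longrightarrow> \<bar>f i j - g i\<bar> \<le> b i"
    and "b \<longlonglongrightarrow> 0" and "g \<longlonglongrightarrow> L"
  shows "real_net_converges f L"
  unfolding real_net_converges_def net_converges_iff_tail
proof (intro allI impI)
  fix e :: real assume "e > 0"
  then have e2: "e/2 > 0" by simp
  have "eventually (\<lambda>i. b i < e/2) sequentially"
    using order_tendstoD(2)[OF \<open>b \<longlonglongrightarrow> 0\<close> e2] .
  moreover have "eventually (\<lambda>i. \<bar>g i - L\<bar> < e/2) sequentially"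
    using tendstoD[OF \<open>g \<longlonglongrightarrow> L\<close> e2] by (simp add: dist_real_def)
  ultimately have "eventually (\<lambda>i. b i < e/2 \<and> \<bar>g i - L\<bar> < e/2) sequentially"
    by (rule eventually_conj)
  then obtain N where N: "\<forall>i\<ge>N. b i < e/2 \<and> \<bar>g i - L\<bar> < e/2"
    unfolding eventually_sequentially by blast
  have "\<bar>f i j - L\<bar> < e" if "N \<le> i" "i \<le> j" for i j
    using close[OF \<open>i \<le> j\<close>] N[rule_format, OF \<open>N \<le> i\<close>] by linarith
  then show "\<exists>N. \<forall>i j. N \<le> i \<longrightarrow> i \<le> j \<longrightarrow> \<bar>f i j - L\<bar> < e"
    by blast
qed

lemma Cauchy_rapid_subseq:
  fixes dist_fn :: "'a \<Rightarrow> 'a \<Rightarrow> real"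
  assumes "\<forall>e>0. \<exists>N. \<forall>m\<ge>N. \<forall>n\<ge>N. dist_fn (s m) (s n) < e"
  obtains r :: "nat \<Rightarrow> nat" where "mono r"
    and "\<And>k m n. r k \<le> m \<Longrightarrow> r k \<le> n \<Longrightarrow> dist_fn (s m) (s n) < (1/2)^k"
proof -
  have "\<forall>k. \<exists>N. \<forall>m\<ge>N. \<forall>n\<ge>N. dist_fn (s m) (s n) < (1/2)^k"
    using assms by simp
  then obtain N where N: "\<And>k m n. N k \<le> m \<Longrightarrow> N k \<le> n \<Longrightarrow> dist_fn (s m) (s n) < (1/2)^k"
    by metis
  define r where "r k = Max (N ` {..k})" for k
  have "mono r"
    unfolding r_def by (intro monoI Max_mono) auto
  moreover have "N k \<le> r k" for k
    unfolding r_def by (intro Max_ge) auto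
  ultimately show ?thesis
    using N that by (meson order.trans)
qed

definition window_Inter :: "(nat \<Rightarrow> 'a set) \<Rightarrow> nat \<Rightarrow> nat \<Rightarrow> 'a set" where
  "window_Inter As i j = (\<Inter>k\<in>{i..j}. As k)"

lemma window_Inter_diag [simp]: "window_Inter As n n = As n"
  by (simp add: window_Inter_def)

lemma window_Inter_antimono: "m \<le> i \<Longrightarrow> j \<le> M \<Longrightarrow> window_Inter As m M \<subseteq> window_Inter As i j"
  by (auto simp: window_Inter_def)

lemma window_Inter_Suc:
  "i \<le> Suc j \<Longrightarrow> window_Inter As i (Suc j) = window_Inter As i j \<inter> As (Suc j)"
  by (auto simp: window_Inter_def atLeastAtMostSuc_conv)

lemma d_mu_sym: "d_mu mu A B = d_mu mu B A"
  unfolding d_mu_def by (simp add: Un_commute)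

locale conjugate_pair_on_algebra = algebra X F for X :: "'a set" and F +
  fixes mup mum :: "'a set \<Rightarrow> real"
  assumes conjugate: "conjugate_pair X F mup mum"
begin

lemma window_Inter_in_F: "(\<And>k. As k \<in> F) \<Longrightarrow> i \<le> j \<Longrightarrow> window_Inter As i j \<in> F"
  unfolding window_Inter_def by (intro finite_INT) auto

lemma mup_empty: "mup {} = 0"
  using conjugate unfolding conjugate_pair_def normalized_set_fun_def by auto

lemma mup_nonneg: "A \<in> F \<Longrightarrow> 0 \<le> mup A"
  using conjugate unfolding conjugate_pair_def normalized_set_fun_def by auto

lemma mup_subadditive:
  assumes "A \<in> F" "B \<in> F" "C \<in> F" "A \<subseteq> B \<union> C"
  shows "mup A \<le> mup B + mup C"
proof -
  have "\<forall>x\<in>X. (indicator A x :: real) \<le> indicator B x + indicator C x"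
    using \<open>A \<subseteq> B \<union> C\<close> by (auto simp: indicator_def)
  then show ?thesis
    using conjugate assms(1-3) unfolding conjugate_pair_def subadditive_def by blast
qed

lemma mum_co_subadditive:
  assumes "A \<in> F" "B \<in> F" "C \<in> F" "A \<subseteq> B \<union> C"
  shows "mum A \<le> mum B + mup C"
proof -
  have "\<forall>x\<in>X. (indicator A x :: real) \<le> indicator B x + indicator C x"
    using \<open>A \<subseteq> B \<union> C\<close> by (auto simp: indicator_def)
  then show ?thesis
    using conjugate assms(1-3) unfolding conjugate_pair_def co_subadditive_def by blast
qed

lemma mup_co_superadditive:
  assumes "A \<in> F" "B \<in> F" "C \<in> F" "B \<union> C \<subseteq> A" "B \<inter> C = {}"
  shows "mup B + mum C \<le> mup A"
proof -
  have "\<forall>x\<in>X. (indicator A x :: real) \<ge> indicator B x + indicator C x"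
    using assms(4,5) by (auto simp: indicator_def)
  then show ?thesis
    using conjugate assms(1-3) unfolding conjugate_pair_def co_superadditive_def by blast
qed

lemma mup_mono: "A \<in> F \<Longrightarrow> B \<in> F \<Longrightarrow> A \<subseteq> B \<Longrightarrow> mup A \<le> mup B"
  using mup_subadditive[of A B "{}"] mup_empty by auto

lemma symdiff_in_F: "A \<in> F \<Longrightarrow> B \<in> F \<Longrightarrow> (A - B) \<union> (B - A) \<in> F"
  by blast

lemma d_mu_nonneg: "A \<in> F \<Longrightarrow> B \<in> F \<Longrightarrow> 0 \<le> d_mu mup A B"
  unfolding d_mu_def by (intro mup_nonneg symdiff_in_F)

lemma d_mu_triangle:
  "A \<in> F \<Longrightarrow> B \<in> F \<Longrightarrow> C \<in> F \<Longrightarrow> d_mu mup A C \<le> d_mu mup A B + d_mu mup B C"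
  unfolding d_mu_def by (intro mup_subadditive symdiff_in_F) auto

lemma d_mu_mono_symdiff:
  "A \<in> F \<Longrightarrow> B \<in> F \<Longrightarrow> C \<in> F \<Longrightarrow> D \<in> F \<Longrightarrow>
    (A - B) \<union> (B - A) \<subseteq> (C - D) \<union> (D - C) \<Longrightarrow> d_mu mup A B \<le> d_mu mup C D"
  unfolding d_mu_def by (intro mup_mono symdiff_in_F)

lemma abs_mup_diff_le_d_mu:
  assumes "A \<in> F" "B \<in> F"
  shows "\<bar>mup A - mup B\<bar> \<le> d_mu mup A B"
proof -
  have "mup A \<le> mup B + d_mu mup A B" "mup B \<le> mup A + d_mu mup A B"
    unfolding d_mu_def using assms by (intro mup_subadditive symdiff_in_F; auto)+
  then show ?thesis by linarith
qed

lemma abs_mum_diff_le_d_mu: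
  assumes "A \<in> F" "B \<in> F"
  shows "\<bar>mum A - mum B\<bar> \<le> d_mu mup A B"
proof -
  have "mum A \<le> mum B + d_mu mup A B" "mum B \<le> mum A + d_mu mup A B"
    unfolding d_mu_def using assms by (intro mum_co_subadditive symdiff_in_F; auto)+
  then show ?thesis by linarith
qed

lemma d_mu_subset_le:
  assumes "A \<in> F" "B \<in> F" "A \<subseteq> B"
  shows "d_mu mup A B \<le> mup B - mum A"
proof -
  have "d_mu mup A B = mup (B - A)"
    unfolding d_mu_def using \<open>A \<subseteq> B\<close> by (metis Diff_eq_empty_iff sup_bot.left_neutral)
  moreover have "mup (B - A) + mum A \<le> mup B"
    using assms by (intro mup_co_superadditive) auto
  ultimately show ?thesis by linarith
qed

lemma real_net_converges_mup_if_net_converges: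
  assumes net: "net_converges (d_mu mup) C A" and "A \<in> F" and C: "\<And>i j. i \<le> j \<Longrightarrow> C i j \<in> F"
  shows "real_net_converges (\<lambda>i j. mup (C i j)) (mup A)"
  unfolding real_net_converges_def net_converges_iff_tail
proof (intro allI impI)
  fix e :: real assume "e > 0"
  then obtain N where "\<forall>i j. N \<le> i \<longrightarrow> i \<le> j \<longrightarrow> d_mu mup (C i j) A < e"
    using net unfolding net_converges_iff_tail by blast
  then show "\<exists>N. \<forall>i j. N \<le> i \<longrightarrow> i \<le> j \<longrightarrow> \<bar>mup (C i j) - mup A\<bar> < e"
    using abs_mup_diff_le_d_mu[OF C \<open>A \<in> F\<close>] by (meson le_less_trans)
qed

lemma window_net_Cauchy:
  assumes As: "\<And>k. As k \<in> F"
    and mup: "real_net_converges (\<lambda>i j. mup (window_Inter As i j)) L"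
    and mum: "real_net_converges (\<lambda>i j. mum (window_Inter As i j)) L"
    and "e > 0"
  obtains N where "\<And>i j i' j'. N \<le> i \<Longrightarrow> i \<le> j \<Longrightarrow> N \<le> i' \<Longrightarrow> i' \<le> j' \<Longrightarrow>
    d_mu mup (window_Inter As i j) (window_Inter As i' j') < e"
proof -
  let ?C = "window_Inter As"
  have CF: "i \<le> j \<Longrightarrow> ?C i j \<in> F" for i j
    using As by (rule window_Inter_in_F)
  have "e/4 > 0" using \<open>e > 0\<close> by simp
  then obtain N1 N2 where
    N1: "\<forall>i j. N1 \<le> i \<longrightarrow> i \<le> j \<longrightarrow> \<bar>mup (?C i j) - L\<bar> < e/4" and
    N2: "\<forall>i j. N2 \<le> i \<longrightarrow> i \<le> j \<longrightarrow> \<bar>mum (?C i j) - L\<bar> < e/4"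
    using mup mum unfolding real_net_converges_def net_converges_iff_tail by meson
  define N where "N = max N1 N2"
  have nested: "d_mu mup (?C i j) (?C m M) < e/2"
    if "N \<le> m" "m \<le> i" "i \<le> j" "j \<le> M" for m i j M
  proof -
    have "d_mu mup (?C i j) (?C m M) = d_mu mup (?C m M) (?C i j)"
      by (rule d_mu_sym)
    also have "\<dots> \<le> mup (?C i j) - mum (?C m M)"
      using that by (intro d_mu_subset_le CF window_Inter_antimono) auto
    also have "\<dots> < e/2"
    proof -
      have "\<bar>mup (?C i j) - L\<bar> < e/4" "\<bar>mum (?C m M) - L\<bar> < e/4"
        using N1 N2 that unfolding N_def by auto
      then show ?thesis unfolding abs_less_iff by linarith
    qed
    finally show ?thesis .
  qed
  show ?thesis
  proof (rule that)
    fix i j i' j' assume "N \<le> i" "i \<le> j" "N \<le> i'" "i' \<le> j'"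
    let ?m = "min i i'" and ?M = "max j j'"
    have "d_mu mup (?C i j) (?C i' j') \<le> d_mu mup (?C i j) (?C ?m ?M) + d_mu mup (?C ?m ?M) (?C i' j')"
      using \<open>i \<le> j\<close> \<open>i' \<le> j'\<close> by (intro d_mu_triangle CF) auto
    also have "\<dots> = d_mu mup (?C i j) (?C ?m ?M) + d_mu mup (?C i' j') (?C ?m ?M)"
      by (simp add: d_mu_sym)
    also have "\<dots> < e/2 + e/2"
      using nested[of ?m i j ?M] nested[of ?m i' j' ?M] \<open>N \<le> i\<close> \<open>i \<le> j\<close> \<open>N \<le> i'\<close> \<open>i' \<le> j'\<close>
      by (intro add_strict_mono) auto
    finally show "d_mu mup (?C i j) (?C i' j') < e" by simp
  qed
qed

lemma window_limit_if_complete: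
  assumes complete: "complete_wrt E (d_mu mup)" and "E \<subseteq> F" and AsE: "\<And>k. As k \<in> E"
    and mup: "real_net_converges (\<lambda>i j. mup (window_Inter As i j)) L"
    and mum: "real_net_converges (\<lambda>i j. mum (window_Inter As i j)) L"
  shows "\<exists>A\<in>E. net_converges (d_mu mup) (window_Inter As) A \<and> mup A = L"
proof -
  let ?C = "window_Inter As"
  have As: "As k \<in> F" for k
    using AsE \<open>E \<subseteq> F\<close> by blast
  have CF: "i \<le> j \<Longrightarrow> ?C i j \<in> F" for i j
    using As by (rule window_Inter_in_F)
  have "\<forall>e>0. \<exists>N. \<forall>m\<ge>N. \<forall>n\<ge>N. d_mu mup (As m) (As n) < e"
  proof (intro allI impI)
    fix e :: real assume "e > 0"
    with window_net_Cauchy[OF As mup mum] obtain N where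
      "\<And>i j i' j'. N \<le> i \<Longrightarrow> i \<le> j \<Longrightarrow> N \<le> i' \<Longrightarrow> i' \<le> j' \<Longrightarrow> d_mu mup (?C i j) (?C i' j') < e"
      by blast
    then show "\<exists>N. \<forall>m\<ge>N. \<forall>n\<ge>N. d_mu mup (As m) (As n) < e"
      by (metis window_Inter_diag order_refl)
  qed
  then obtain A where "A \<in> E" and lim: "(\<lambda>n. d_mu mup (As n) A) \<longlonglongrightarrow> 0"
    using complete AsE unfolding complete_wrt_def by blast
  have "A \<in> F" using \<open>A \<in> E\<close> \<open>E \<subseteq> F\<close> by blast
  have net: "net_converges (d_mu mup) ?C A"
    unfolding net_converges_iff_tail
  proof (intro allI impI)
    fix e :: real assume "e > 0"
    then have "e/2 > 0" by simp
    with window_net_Cauchy[OF As mup mum] obtain N where N: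
      "\<And>i j i' j'. N \<le> i \<Longrightarrow> i \<le> j \<Longrightarrow> N \<le> i' \<Longrightarrow> i' \<le> j' \<Longrightarrow> d_mu mup (?C i j) (?C i' j') < e/2"
      by blast
    obtain N' where N': "\<forall>n\<ge>N'. d_mu mup (As n) A < e/2"
      using order_tendstoD(2)[OF lim \<open>e/2 > 0\<close>] unfolding eventually_sequentially by blast
    have "d_mu mup (?C i j) A < e" if "max N N' \<le> i" "i \<le> j" for i j
    proof -
      have "d_mu mup (?C i j) A \<le> d_mu mup (?C i j) (?C j j) + d_mu mup (As j) A"
        using d_mu_triangle[OF CF[OF \<open>i \<le> j\<close>] As \<open>A \<in> F\<close>] by simp
      also have "\<dots> < e/2 + e/2"
        using N[of i j j j] N'[rule_format, of j] that by (intro add_strict_mono) auto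
      finally show ?thesis by simp
    qed
    then show "\<exists>N. \<forall>i j. N \<le> i \<longrightarrow> i \<le> j \<longrightarrow> d_mu mup (?C i j) A < e"
      by blast
  qed
  have "mup A = L"
    using real_net_converges_unique[OF real_net_converges_mup_if_net_converges[OF net \<open>A \<in> F\<close> CF] mup] .
  with \<open>A \<in> E\<close> net show ?thesis by blast
qed

lemma window_close_to_start:
  assumes A: "\<And>k. A k \<in> F" and rapid: "\<And>k. d_mu mup (A k) (A (Suc k)) < (1/2)^k"
    and "i \<le> j"
  shows "d_mu mup (window_Inter A i j) (A i) \<le> 2 * (1/2)^i"
proof -
  let ?C = "window_Inter A"
  have CF: "i \<le> j \<Longrightarrow> ?C i j \<in> F" for i j
    using A by (rule window_Inter_in_F)
  have "d_mu mup (?C i j) (A i) \<le> 2 * (1/2)^i - 2 * (1/2)^j"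
    using \<open>i \<le> j\<close>
  proof (induction j rule: dec_induct)
    case base
    then show ?case by (simp add: d_mu_def mup_empty)
  next
    case (step j)
    have "?C i (Suc j) = ?C i j \<inter> A (Suc j)"
      using step.hyps(1) by (simp add: window_Inter_Suc)
    moreover have "?C i j \<subseteq> A j"
      using step.hyps(1) by (auto simp: window_Inter_def)
    ultimately have "d_mu mup (?C i (Suc j)) (?C i j) \<le> d_mu mup (A j) (A (Suc j))"
      using step.hyps(1) by (intro d_mu_mono_symdiff CF A) auto
    moreover have "d_mu mup (?C i (Suc j)) (A i) \<le> d_mu mup (?C i (Suc j)) (?C i j) + d_mu mup (?C i j) (A i)"
      using step.hyps(1) by (intro d_mu_triangle CF A) auto
    ultimately show ?case
      using rapid[of j] step.IH by simp
  qed
  moreover have "(0::real) \<le> (1/2)^j" by simp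
  ultimately show ?thesis by linarith
qed

lemma window_measures_converge_if_rapid:
  assumes AE: "\<And>k. A k \<in> E" and "E \<subseteq> F" and mup_eq_mum: "\<forall>A\<in>E. mup A = mum A"
    and rapid: "\<And>k m. k \<le> m \<Longrightarrow> d_mu mup (A k) (A m) < (1/2)^k"
  obtains L where "real_net_converges (\<lambda>i j. mup (window_Inter A i j)) L"
    and "real_net_converges (\<lambda>i j. mum (window_Inter A i j)) L"
proof -
  have AF: "A k \<in> F" for k
    using AE \<open>E \<subseteq> F\<close> by blast
  have CF: "i \<le> j \<Longrightarrow> window_Inter A i j \<in> F" for i j
    using AF by (rule window_Inter_in_F)
  have "Cauchy (\<lambda>k. mup (A k))"
  proof (rule metric_CauchyI)
    fix e :: real assume "e > 0"
    then obtain k where k: "(1/2)^k < e/2"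
      using real_arch_pow_inv[of "e/2" "1/2"] by auto
    have "dist (mup (A m)) (mup (A n)) < e" if "k \<le> m" "k \<le> n" for m n
    proof -
      have "d_mu mup (A k) (A m) < (1/2)^k" "d_mu mup (A k) (A n) < (1/2)^k"
        using rapid[OF \<open>k \<le> m\<close>] rapid[OF \<open>k \<le> n\<close>] .
      moreover have "\<bar>mup (A k) - mup (A m)\<bar> \<le> d_mu mup (A k) (A m)"
        "\<bar>mup (A k) - mup (A n)\<bar> \<le> d_mu mup (A k) (A n)"
        by (intro abs_mup_diff_le_d_mu AF)+
      ultimately show ?thesis
        using k unfolding dist_real_def abs_le_iff abs_less_iff by linarith
    qed
    then show "\<exists>M. \<forall>m\<ge>M. \<forall>n\<ge>M. dist (mup (A m)) (mup (A n)) < e"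
      by blast
  qed
  then obtain L where L: "(\<lambda>k. mup (A k)) \<longlonglongrightarrow> L"
    by (auto simp: Cauchy_convergent_iff convergent_def)
  have close: "i \<le> j \<Longrightarrow> d_mu mup (window_Inter A i j) (A i) \<le> 2 * (1/2)^i" for i j
    using rapid by (intro window_close_to_start AF) auto
  have bound: "(\<lambda>i. 2 * (1/2)^i :: real) \<longlonglongrightarrow> 0"
    by (intro tendsto_mult_right_zero LIMSEQ_power_zero) simp
  have "real_net_converges (\<lambda>i j. mup (window_Inter A i j)) L"
  proof (rule real_net_converges_if_close_to_seq[OF _ bound L])
    fix i j :: nat assume "i \<le> j"
    show "\<bar>mup (window_Inter A i j) - mup (A i)\<bar> \<le> 2 * (1/2)^i"
      using abs_mup_diff_le_d_mu[OF CF[OF \<open>i \<le> j\<close>] AF[of i]] close[OF \<open>i \<le> j\<close>]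
      by linarith
  qed
  moreover have "real_net_converges (\<lambda>i j. mum (window_Inter A i j)) L"
  proof (rule real_net_converges_if_close_to_seq[OF _ bound L])
    fix i j :: nat assume "i \<le> j"
    have "mup (A i) = mum (A i)"
      using mup_eq_mum AE by blast
    then show "\<bar>mum (window_Inter A i j) - mup (A i)\<bar> \<le> 2 * (1/2)^i"
      using abs_mum_diff_le_d_mu[OF CF[OF \<open>i \<le> j\<close>] AF[of i]] close[OF \<open>i \<le> j\<close>]
      by linarith
  qed
  ultimately show ?thesis by (rule that)
qed

lemma d_mu_tendsto_if_rapid_subseq_tendsto:
  assumes sF: "\<And>n. s n \<in> F" and "B \<in> F"
    and r: "\<And>k m n. r k \<le> m \<Longrightarrow> r k \<le> n \<Longrightarrow> d_mu mup (s m) (s n) < (1/2)^k"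
    and sub: "\<forall>e>0. \<exists>N. \<forall>i\<ge>N. d_mu mup (s (r i)) B < e"
  shows "(\<lambda>n. d_mu mup (s n) B) \<longlonglongrightarrow> 0"
proof (rule LIMSEQ_I)
  fix e :: real assume "e > 0"
  then obtain N where N: "\<forall>i\<ge>N. d_mu mup (s (r i)) B < e/2"
    using sub by (meson half_gt_zero)
  obtain k where k: "(1/2)^k < e/2"
    using real_arch_pow_inv[of "e/2" "1/2"] \<open>e > 0\<close> by auto
  define i where "i = max N k"
  have "d_mu mup (s n) B < e" if "r i \<le> n" for n
  proof -
    have "d_mu mup (s n) B \<le> d_mu mup (s n) (s (r i)) + d_mu mup (s (r i)) B"
      by (intro d_mu_triangle sF \<open>B \<in> F\<close>)
    moreover have "(1/2 :: real)^i \<le> (1/2)^k"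
      unfolding i_def by (intro power_decreasing) auto
    moreover have "d_mu mup (s n) (s (r i)) < (1/2)^i"
      using r[OF that order_refl] .
    moreover have "d_mu mup (s (r i)) B < e/2"
      using N by (simp add: i_def)
    ultimately show ?thesis using k by linarith
  qed
  then show "\<exists>no. \<forall>n\<ge>no. norm (d_mu mup (s n) B - 0) < e"
    using d_mu_nonneg[OF sF \<open>B \<in> F\<close>] by auto
qed

lemma complete_if_window_limits:
  assumes "E \<subseteq> F" and mup_eq_mum: "\<forall>A\<in>E. mup A = mum A"
    and limits: "\<And>As L. (\<And>k. As k \<in> E) \<Longrightarrow>
      real_net_converges (\<lambda>i j. mup (window_Inter As i j)) L \<Longrightarrow>
      real_net_converges (\<lambda>i j. mum (window_Inter As i j)) L \<Longrightarrow>
      \<exists>B\<in>E. net_converges (d_mu mup) (window_Inter As) B"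
  shows "complete_wrt E (d_mu mup)"
  unfolding complete_wrt_def
proof (intro allI impI, elim conjE)
  fix s :: "nat \<Rightarrow> 'a set"
  assume sE: "\<forall>n. s n \<in> E" and Cauchy: "\<forall>e>0. \<exists>N. \<forall>m\<ge>N. \<forall>n\<ge>N. d_mu mup (s m) (s n) < e"
  have sF: "s n \<in> F" for n
    using sE \<open>E \<subseteq> F\<close> by blast
  obtain r where "mono r" and r: "\<And>k m n. r k \<le> m \<Longrightarrow> r k \<le> n \<Longrightarrow> d_mu mup (s m) (s n) < (1/2)^k"
    using Cauchy_rapid_subseq[of "d_mu mup" s] Cauchy by blast
  define A where "A k = s (r k)" for k
  have AE: "A k \<in> E" and AF: "A k \<in> F" for k
    unfolding A_def using sE sF by auto
  have "d_mu mup (A k) (A m) < (1/2)^k" if "k \<le> m" for k m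
    unfolding A_def using r \<open>mono r\<close> that by (meson monoD order_refl)
  then obtain L where "real_net_converges (\<lambda>i j. mup (window_Inter A i j)) L"
    and "real_net_converges (\<lambda>i j. mum (window_Inter A i j)) L"
    by (rule window_measures_converge_if_rapid[OF AE \<open>E \<subseteq> F\<close> mup_eq_mum])
  then obtain B where "B \<in> E" and net: "net_converges (d_mu mup) (window_Inter A) B"
    using limits[of A, OF AE] by blast
  have "B \<in> F" using \<open>B \<in> E\<close> \<open>E \<subseteq> F\<close> by blast
  have "\<forall>e>0. \<exists>N. \<forall>i\<ge>N. d_mu mup (s (r i)) B < e"
    using net unfolding net_converges_iff_tail A_def by (metis window_Inter_diag order_refl)
  then have "(\<lambda>n. d_mu mup (s n) B) \<longlonglongrightarrow> 0"
    by (intro d_mu_tendsto_if_rapid_subseq_tendsto[of s B r] sF \<open>B \<in> F\<close> r)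
  with \<open>B \<in> E\<close> show "\<exists>B\<in>E. (\<lambda>n. d_mu mup (s n) B) \<longlonglongrightarrow> 0" by blast
qed

end

theorem mainTheorem4:
  fixes X :: "'a set" and F E :: "'a set set" and mup mum :: "'a set \<Rightarrow> real"
  assumes "algebra X F"
    and "E \<subseteq> F"
    and "conjugate_pair X F mup mum"
    and "\<forall>A\<in>E. mup A = mum A"
  shows "complete_wrt E (d_mu mup) \<longleftrightarrow>
    (\<forall>As :: nat \<Rightarrow> 'a set. \<forall>L :: real.
       (\<forall>k. As k \<in> E) \<and>
       real_net_converges (\<lambda>i j. mup (\<Inter>k\<in>{i..j}. As k)) L \<and>
       real_net_converges (\<lambda>i j. mum (\<Inter>k\<in>{i..j}. As k)) L
       \<longrightarrow> (\<exists>A\<in>E. net_converges (d_mu mup) (\<lambda>i j. \<Inter>k\<in>{i..j}. As k) A \<and> mup A = L))"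
proof -
  interpret conjugate_pair_on_algebra X F mup mum
    using assms(1,3) by (simp add: conjugate_pair_on_algebra_def conjugate_pair_on_algebra_axioms_def)
  show ?thesis
    unfolding window_Inter_def[symmetric]
    using window_limit_if_complete[OF _ assms(2)] complete_if_window_limits[OF assms(2,4)]
    by blast
qed

end
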